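(* Let $E_1,E_2,E_3,H$ be logically independent events with $H\ne\emptyset$, and let $\mathscr C_i=E_i|H$ ($i=1,2,3$), $\mathscr C_{ij}=(E_i|H)\wedge(E_j|H)$ ($1\le i<j\le3$), $\mathscr C_{123}=(E_1|H)\wedge(E_2|H)\wedge(E_3|H)$. Then an assessment $(x_1,x_2,x_3,x_{12},x_{13},x_{23},x_{123})$ on $\{\mathscr C_1,\mathscr C_2,\mathscr C_3,\mathscr C_{12},\mathscr C_{13},\mathscr C_{23},\mathscr C_{123}\}$ is coherent if and only if $(x_1,x_2,x_3)\in[0,1]^3$; $\max\{x_1+x_2-1,x_{13}+x_{23}-x_3,0\}\le x_{12}\le\min\{x_1,x_2\}$; $\max\{x_1+x_3-1,x_{12}+x_{23}-x_2,0\}\le x_{13}\le\min\{x_1,x_3\}$; $\max\{x_2+x_3-1,x_{12}+x_{13}-x_1,0\}\le x_{23}\le\min\{x_2,x_3\}$; $1-x_1-x_2-x_3+x_{12}+x_{13}+x_{23}\ge0$; $x_{123}\ge\max\{0,x_{12}+x_{13}-x_1,x_{12}+x_{23}-x_2,x_{13}+x_{23}-x_3\}$; $x_{123}\le\min\{x_{12},x_{13},x_{23},1-x_1-x_2-x_3+x_{12}+x_{13}+x_{23}\}$.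
   Context: Events are identified with their indicators; $\bar E$ is the negation of $E$. For $H\ne\emptyset$ the conditional event $E|H$ is true if $EH$ is true, false if $\bar EH$ is true, void if $\bar H$ is true; with $P(E|H)=x$ it is identified with the random quantity $EH+x\bar H$, and a conditional random quantity $X|H$ with prevision $\mu$ with $XH+\mu\bar H$. Coherence (de Finetti): an assessment $(\mu_1,\dots,\mu_m)$ on $\{X_1|H_1,\dots,X_m|H_m\}$ is coherent iff for all real stakes $s_i$ the gain $G=\sum_is_iH_i(X_i-\mu_i)$, restricted to $H_1\vee\dots\vee H_m$, satisfies $\min G\le0\le\max G$. Logical independence: all conjunctions of the listed events or their negations are nonempty. Conjunction of conditional events $E_i|H_i$, $i\in\{1,\dots,n\}$: given prevision values $x_S$ for the sub-conjunctions $\mathscr C_S=\bigwedge_{i\in S}(E_i|H_i)$, $\emptyset\ne S\subsetneq\{1,\dots,n\}$ (with $x_{\{i\}}=P(E_i|H_i)$), $\mathscr C_{1\cdots n}$ equals $1$ if all $E_iH_i$ are true, $0$ if some $\bar E_iH_i$ is true, $x_S$ if $(\bigwedge_{i\in S}\bar H_i)(\bigwedge_{i\notin S}E_iH_i)$ is true, and its own prevision $x_{1\cdots n}$ if all $H_i$ are false. Here all $H_i=H$, $x_i=\mathbb P(\mathscr C_i)$, $x_{ij}=\mathbb P(\mathscr C_{ij})$, $x_{123}=\mathbb P(\mathscr C_{123})$. *)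

theory Defs
  imports Complex_Main
begin

definition ind :: "'w set \<Rightarrow> 'w \<Rightarrow> real" where
  "ind A w = (if w \<in> A then 1 else 0)"

definition logically_independent :: "'w set list \<Rightarrow> bool" where
  "logically_independent L \<longleftrightarrow>
     (\<forall>bs::bool list. length bs = length L \<longrightarrow>
        (\<Inter>i<length L. if bs ! i then L ! i else - (L ! i)) \<noteq> {})"

text \<open>Conjunction of the conditional events E i | H i, i in S, given prevision values
  x T for all nonempty T \<subseteq> S (x S being its own prevision):
  1 if all E i H i true, 0 if some (not E i) H i true, otherwise x of the set of
  indices whose conditioning event is false.\<close>
definition conj_ce :: "(nat \<Rightarrow> 'w set) \<Rightarrow> (nat \<Rightarrow> 'w set) \<Rightarrow> nat set \<Rightarrow> (nat set \<Rightarrow> real)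
                       \<Rightarrow> 'w \<Rightarrow> real" where
  "conj_ce E H S x w =
     (if \<forall>i\<in>S. w \<in> E i \<inter> H i then 1
      else if \<exists>i\<in>S. w \<in> H i - E i then 0
      else x {i\<in>S. w \<notin> H i})"

text \<open>de Finetti coherence of an assessment on conditional random quantities X_k | H_k
  with previsions mu_k, given as triples (X_k, H_k, mu_k): for all real stakes, the
  gain restricted to the union of the conditioning events takes a value \<le> 0 and
  a value \<ge> 0 (min G \<le> 0 \<le> max G).\<close>
definition coherent :: "(('w \<Rightarrow> real) \<times> 'w set \<times> real) list \<Rightarrow> bool" where
  "coherent F \<longleftrightarrow>
     (\<forall>s::nat \<Rightarrow> real.
        let G = (\<lambda>w. \<Sum>k<length F. s k * ind (fst (snd (F ! k))) w
                                     * (fst (F ! k) w - snd (snd (F ! k))));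
            D = (\<Union>k<length F. fst (snd (F ! k)))
        in (\<exists>w\<in>D. G w \<le> 0) \<and> (\<exists>w\<in>D. 0 \<le> G w))"

definition asg3 :: "real \<Rightarrow> real \<Rightarrow> real \<Rightarrow> real \<Rightarrow> real \<Rightarrow> real \<Rightarrow> real \<Rightarrow> nat set \<Rightarrow> real" where
  "asg3 x1 x2 x3 x12 x13 x23 x123 S =
     (if S = {1} then x1 else if S = {2} then x2 else if S = {3} then x3
      else if S = {1,2} then x12 else if S = {1,3} then x13 else if S = {2,3} then x23
      else if S = {1,2,3} then x123 else 0)"

end

theory Submission
  imports Defs
begin

text \<open>On \<open>H\<close> every sub-conjunction is the indicator of the intersection of its events, so
  coherence only sees the eight constituents \<open>E\<^sub>1\<^sup>\<plusminus> E\<^sub>2\<^sup>\<plusminus> E\<^sub>3\<^sup>\<plusminus> H\<close>, all of them possible by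
  logical independence. By inclusion-exclusion the assessment assigns a mass to each
  constituent, the masses sum to one, and every gain averages to zero against them. So
  nonnegative masses force every gain to change sign, while a negative mass is exposed by
  the stakes whose gain is the indicator of that constituent minus its mass. Nonnegativity
  of the eight masses is precisely the stated system of inequalities.\<close>

lemma exists_nonpos_of_convex_comb_zero:
  fixes p g :: "'a \<Rightarrow> real"
  assumes "finite A" and "\<And>a. a \<in> A \<Longrightarrow> 0 \<le> p a" and "sum p A = 1"
    and "(\<Sum>a\<in>A. p a * g a) = 0"
  shows "\<exists>a\<in>A. g a \<le> 0"
proof (rule ccontr)
  assume "\<not> ?thesis"
  then have pos: "0 < g a" if "a \<in> A" for a
    using that by (simp add: not_le)
  with assms(2) have nonneg: "0 \<le> p a * g a" if "a \<in> A" for a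
    using that by (simp add: less_imp_le)
  have "\<forall>a\<in>A. p a * g a = 0"
    using sum_nonneg_eq_0_iff[OF assms(1) nonneg] assms(4) by simp
  with pos have "\<forall>a\<in>A. p a = 0" by (metis less_irrefl mult_eq_0_iff)
  then have "sum p A = 0" by simp
  with assms(3) show False by simp
qed

lemma sum_UNIV_bool3:
  "(\<Sum>\<omega>\<in>UNIV. f \<omega>) = f (True, True, True) + f (True, True, False) + f (True, False, True)
     + f (False, True, True) + f (True, False, False) + f (False, True, False)
     + f (False, False, True) + (f (False, False, False) :: real)"
  by (simp add: UNIV_Times_UNIV[symmetric] sum.cartesian_product[symmetric] UNIV_bool
      del: UNIV_Times_UNIV)

lemma coherent_common_condition:
  assumes "L \<noteq> []"
  shows "coherent (map (\<lambda>(X, \<mu>). (X, H, \<mu>)) L) \<longleftrightarrow>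
    (\<forall>s. (\<exists>w\<in>H. (\<Sum>k<length L. s k * (fst (L ! k) w - snd (L ! k))) \<le> 0)
       \<and> (\<exists>w\<in>H. 0 \<le> (\<Sum>k<length L. s k * (fst (L ! k) w - snd (L ! k)))))"
proof -
  have gain: "(\<Sum>k<length L. s k * ind H w * (fst (L ! k) w - snd (L ! k)))
      = (\<Sum>k<length L. s k * (fst (L ! k) w - snd (L ! k)))" if "w \<in> H" for s w
    using that by (simp add: ind_def)
  have "{..<length L} \<noteq> {}" using assms by auto
  then show ?thesis
    unfolding coherent_def Let_def by (simp add: case_prod_beta gain cong: bex_cong)
qed

lemma conj_ce_common_condition:
  "w \<in> H \<Longrightarrow> conj_ce E (\<lambda>_. H) S x w = of_bool (\<forall>i\<in>S. w \<in> E i)"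
  by (auto simp: conj_ce_def)

definition constituent :: "(nat \<Rightarrow> 'w set) \<Rightarrow> 'w \<Rightarrow> bool \<times> bool \<times> bool" where
  "constituent E w = (w \<in> E 1, w \<in> E 2, w \<in> E 3)"

lemma logically_independent_constituent:
  assumes "logically_independent [E 1, E 2, E 3, H]"
  shows "\<exists>w\<in>H. constituent E w = (a, b, c)"
proof -
  let ?L = "[E 1, E 2, E 3, H]" and ?bs = "[a, b, c, True]"
  have "length ?bs = length ?L" by simp
  with assms obtain w
    where "w \<in> (\<Inter>i<length ?L. if ?bs ! i then ?L ! i else - (?L ! i))"
    unfolding logically_independent_def by blast
  then have w: "w \<in> (if ?bs ! i then ?L ! i else - (?L ! i))" if "i < 4" for i
    using that by simp
  have "w \<in> E 1 \<longleftrightarrow> a" using w[of 0] by (cases a) simp_all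
  moreover have "w \<in> E 2 \<longleftrightarrow> b" using w[of 1] by (cases b) simp_all
  moreover have "w \<in> E 3 \<longleftrightarrow> c" using w[of 2] by (cases c) simp_all
  moreover have "w \<in> H" using w[of 3] by simp
  ultimately show ?thesis by (auto simp: constituent_def)
qed

lemma bex_constituent_iff:
  assumes "logically_independent [E 1, E 2, E 3, H]"
  shows "(\<exists>w\<in>H. P (constituent E w)) \<longleftrightarrow> (\<exists>\<omega>. P \<omega>)"
  using logically_independent_constituent[OF assms] by (metis prod_cases3)

fun constituent_stakes :: "bool \<times> bool \<times> bool \<Rightarrow> nat \<Rightarrow> real" where
  "constituent_stakes (True, True, True) = (!) [0, 0, 0, 0, 0, 0, 1]"
| "constituent_stakes (True, True, False) = (!) [0, 0, 0, 1, 0, 0, -1]"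
| "constituent_stakes (True, False, True) = (!) [0, 0, 0, 0, 1, 0, -1]"
| "constituent_stakes (False, True, True) = (!) [0, 0, 0, 0, 0, 1, -1]"
| "constituent_stakes (True, False, False) = (!) [1, 0, 0, -1, -1, 0, 1]"
| "constituent_stakes (False, True, False) = (!) [0, 1, 0, -1, 0, -1, 1]"
| "constituent_stakes (False, False, True) = (!) [0, 0, 1, 0, -1, -1, 1]"
| "constituent_stakes (False, False, False) = (!) [-1, -1, -1, 1, 1, 1, -1]"

context
  fixes x1 x2 x3 x12 x13 x23 x123 :: real
begin

definition gain3 :: "(nat \<Rightarrow> real) \<Rightarrow> bool \<times> bool \<times> bool \<Rightarrow> real" where
  "gain3 s = (\<lambda>(a, b, c).
     s 0 * (of_bool a - x1) + s 1 * (of_bool b - x2) + s 2 * (of_bool c - x3)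
     + s 3 * (of_bool (a \<and> b) - x12) + s 4 * (of_bool (a \<and> c) - x13)
     + s 5 * (of_bool (b \<and> c) - x23) + s 6 * (of_bool (a \<and> b \<and> c) - x123))"

fun constituent_mass :: "bool \<times> bool \<times> bool \<Rightarrow> real" where
  "constituent_mass (True, True, True) = x123"
| "constituent_mass (True, True, False) = x12 - x123"
| "constituent_mass (True, False, True) = x13 - x123"
| "constituent_mass (False, True, True) = x23 - x123"
| "constituent_mass (True, False, False) = x1 - x12 - x13 + x123"
| "constituent_mass (False, True, False) = x2 - x12 - x23 + x123"
| "constituent_mass (False, False, True) = x3 - x13 - x23 + x123"
| "constituent_mass (False, False, False) = 1 - x1 - x2 - x3 + x12 + x13 + x23 - x123"

lemma coherent_conj3_iff_gain3:
  fixes E :: "nat \<Rightarrow> 'w set" and f :: "nat set \<Rightarrow> real"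
  shows "coherent
     [ (conj_ce E (\<lambda>_. H) {1} f, H, x1),
       (conj_ce E (\<lambda>_. H) {2} f, H, x2),
       (conj_ce E (\<lambda>_. H) {3} f, H, x3),
       (conj_ce E (\<lambda>_. H) {1,2} f, H, x12),
       (conj_ce E (\<lambda>_. H) {1,3} f, H, x13),
       (conj_ce E (\<lambda>_. H) {2,3} f, H, x23),
       (conj_ce E (\<lambda>_. H) {1,2,3} f, H, x123) ]
   \<longleftrightarrow> (\<forall>s. (\<exists>w\<in>H. gain3 s (constituent E w) \<le> 0) \<and> (\<exists>w\<in>H. 0 \<le> gain3 s (constituent E w)))"
proof -
  let ?X = "\<lambda>S. conj_ce E (\<lambda>_. H) S f"
  let ?L = "[(?X {1}, x1), (?X {2}, x2), (?X {3}, x3), (?X {1,2}, x12), (?X {1,3}, x13),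
             (?X {2,3}, x23), (?X {1,2,3}, x123)]"
  have gain: "(\<Sum>k<length ?L. s k * (fst (?L ! k) w - snd (?L ! k))) = gain3 s (constituent E w)"
    if "w \<in> H" for s w
    using that by (simp add: eval_nat_numeral conj_ce_common_condition gain3_def constituent_def)
  have "?L \<noteq> []" by simp
  from coherent_common_condition[OF this, of H]
  have "coherent (map (\<lambda>(X, \<mu>). (X, H, \<mu>)) ?L) \<longleftrightarrow>
      (\<forall>s. (\<exists>w\<in>H. gain3 s (constituent E w) \<le> 0) \<and> (\<exists>w\<in>H. 0 \<le> gain3 s (constituent E w)))"
    by (simp only: gain cong: bex_cong)
  then show ?thesis by (simp only: list.map prod.case)
qed

lemma gain3_uminus: "gain3 (\<lambda>k. - s k) \<omega> = - gain3 s \<omega>"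
  by (simp add: gain3_def algebra_simps split: prod.split)

lemma gain3_constituent_stakes:
  "gain3 (constituent_stakes \<omega>) \<omega>' = of_bool (\<omega>' = \<omega>) - constituent_mass \<omega>"
  by (cases \<omega> rule: constituent_mass.cases; cases \<omega>' rule: constituent_mass.cases)
    (simp_all add: gain3_def)

lemma sum_constituent_mass: "(\<Sum>\<omega>\<in>UNIV. constituent_mass \<omega>) = 1"
  by (simp add: sum_UNIV_bool3)

lemma sum_constituent_mass_gain3: "(\<Sum>\<omega>\<in>UNIV. constituent_mass \<omega> * gain3 s \<omega>) = 0"
  by (simp add: sum_UNIV_bool3 gain3_def algebra_simps)

lemma gain3_sign_change_iff:
  "(\<forall>s. (\<exists>\<omega>. gain3 s \<omega> \<le> 0) \<and> (\<exists>\<omega>. 0 \<le> gain3 s \<omega>)) \<longleftrightarrow> (\<forall>\<omega>. 0 \<le> constituent_mass \<omega>)"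
proof
  assume sign_change: "\<forall>s. (\<exists>\<omega>. gain3 s \<omega> \<le> 0) \<and> (\<exists>\<omega>. 0 \<le> gain3 s \<omega>)"
  show "\<forall>\<omega>. 0 \<le> constituent_mass \<omega>"
  proof
    fix \<omega>
    from sign_change obtain \<omega>' where "gain3 (constituent_stakes \<omega>) \<omega>' \<le> 0" by blast
    then show "0 \<le> constituent_mass \<omega>"
      unfolding gain3_constituent_stakes by (cases "\<omega>' = \<omega>") simp_all
  qed
next
  assume mass_nonneg: "\<forall>\<omega>. 0 \<le> constituent_mass \<omega>"
  have nonpos: "\<exists>\<omega>. gain3 s \<omega> \<le> 0" for s
  proof -
    have "\<exists>\<omega>\<in>UNIV. gain3 s \<omega> \<le> 0"
      by (rule exists_nonpos_of_convex_comb_zero[where p = constituent_mass])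
        (simp_all add: mass_nonneg sum_constituent_mass sum_constituent_mass_gain3)
    then show ?thesis by blast
  qed
  show "\<forall>s. (\<exists>\<omega>. gain3 s \<omega> \<le> 0) \<and> (\<exists>\<omega>. 0 \<le> gain3 s \<omega>)"
  proof
    fix s
    show "(\<exists>\<omega>. gain3 s \<omega> \<le> 0) \<and> (\<exists>\<omega>. 0 \<le> gain3 s \<omega>)"
      using nonpos[of s] nonpos[of "\<lambda>k. - s k"] by (simp add: gain3_uminus)
  qed
qed

lemma constituent_mass_nonneg_iff:
  "(\<forall>\<omega>. 0 \<le> constituent_mass \<omega>) \<longleftrightarrow>
   (x1 \<in> {0..1} \<and> x2 \<in> {0..1} \<and> x3 \<in> {0..1} \<and>
    max (max (x1 + x2 - 1) (x13 + x23 - x3)) 0 \<le> x12 \<and> x12 \<le> min x1 x2 \<and>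
    max (max (x1 + x3 - 1) (x12 + x23 - x2)) 0 \<le> x13 \<and> x13 \<le> min x1 x3 \<and>
    max (max (x2 + x3 - 1) (x12 + x13 - x1)) 0 \<le> x23 \<and> x23 \<le> min x2 x3 \<and>
    1 - x1 - x2 - x3 + x12 + x13 + x23 \<ge> 0 \<and>
    x123 \<ge> max (max 0 (x12 + x13 - x1)) (max (x12 + x23 - x2) (x13 + x23 - x3)) \<and>
    x123 \<le> min (min x12 x13) (min x23 (1 - x1 - x2 - x3 + x12 + x13 + x23)))"
  unfolding split_paired_All all_bool_eq atLeastAtMost_iff max.bounded_iff min.bounded_iff
  by (simp only: constituent_mass.simps) (intro iffI conjI; elim conjE; linarith)

end

theorem theorem21:
  fixes E :: "nat \<Rightarrow> 'w set" and H :: "'w set"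
    and x1 x2 x3 x12 x13 x23 x123 :: real
  assumes "H \<noteq> {}"
    and "logically_independent [E 1, E 2, E 3, H]"
  shows "coherent
     [ (conj_ce E (\<lambda>_. H) {1} (asg3 x1 x2 x3 x12 x13 x23 x123), H, x1),
       (conj_ce E (\<lambda>_. H) {2} (asg3 x1 x2 x3 x12 x13 x23 x123), H, x2),
       (conj_ce E (\<lambda>_. H) {3} (asg3 x1 x2 x3 x12 x13 x23 x123), H, x3),
       (conj_ce E (\<lambda>_. H) {1,2} (asg3 x1 x2 x3 x12 x13 x23 x123), H, x12),
       (conj_ce E (\<lambda>_. H) {1,3} (asg3 x1 x2 x3 x12 x13 x23 x123), H, x13),
       (conj_ce E (\<lambda>_. H) {2,3} (asg3 x1 x2 x3 x12 x13 x23 x123), H, x23),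
       (conj_ce E (\<lambda>_. H) {1,2,3} (asg3 x1 x2 x3 x12 x13 x23 x123), H, x123) ]
   \<longleftrightarrow>
   (x1 \<in> {0..1} \<and> x2 \<in> {0..1} \<and> x3 \<in> {0..1} \<and>
    max (max (x1 + x2 - 1) (x13 + x23 - x3)) 0 \<le> x12 \<and> x12 \<le> min x1 x2 \<and>
    max (max (x1 + x3 - 1) (x12 + x23 - x2)) 0 \<le> x13 \<and> x13 \<le> min x1 x3 \<and>
    max (max (x2 + x3 - 1) (x12 + x13 - x1)) 0 \<le> x23 \<and> x23 \<le> min x2 x3 \<and>
    1 - x1 - x2 - x3 + x12 + x13 + x23 \<ge> 0 \<and>
    x123 \<ge> max (max 0 (x12 + x13 - x1)) (max (x12 + x23 - x2) (x13 + x23 - x3)) \<and>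
    x123 \<le> min (min x12 x13) (min x23 (1 - x1 - x2 - x3 + x12 + x13 + x23)))"
  (is "?coherent \<longleftrightarrow> ?bounds")
proof -
  let ?gain = "gain3 x1 x2 x3 x12 x13 x23 x123"
  have "?coherent \<longleftrightarrow>
      (\<forall>s. (\<exists>w\<in>H. ?gain s (constituent E w) \<le> 0) \<and> (\<exists>w\<in>H. 0 \<le> ?gain s (constituent E w)))"
    by (rule coherent_conj3_iff_gain3)
  also have "\<dots> \<longleftrightarrow> (\<forall>s. (\<exists>\<omega>. ?gain s \<omega> \<le> 0) \<and> (\<exists>\<omega>. 0 \<le> ?gain s \<omega>))"
    by (intro all_cong1 conj_cong; rule bex_constituent_iff[OF assms(2)])
  also have "\<dots> \<longleftrightarrow> (\<forall>\<omega>. 0 \<le> constituent_mass x1 x2 x3 x12 x13 x23 x123 \<omega>)"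
    by (rule gain3_sign_change_iff)
  also have "\<dots> \<longleftrightarrow> ?bounds"
    by (rule constituent_mass_nonneg_iff)
  finally show ?thesis .
qed

end
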